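(* Let $K$ be an admissible kernel on $X\times Y$ and let $C_K\in\mathbb{R}$ be its constant, i.e. $\int_X K(x,y)\,dm_X(x)=C_K$ for all $y\in Y$. Let $\mu$ be a Borel probability measure on $Y$ and $c\in\mathbb{R}$, and suppose that $U_K^\mu(x)=c$ for all $x\in X$. Then $c=C_K$.
   Context: $(X,d_X)$ and $(Y,d_Y)$ are compact metric spaces and $G$ is a compact topological group acting isometrically and transitively on both $X$ and $Y$. $m_X$ and $m_Y$ denote the unique $G$-invariant Radon (Borel) probability measures on $X$ and $Y$. A Borel measurable $K:X\times Y\to\mathbb{R}\cup\{-\infty\}$ is an admissible kernel if: (i) there is $B_K\in[0,\infty)$ with $-\infty\le K(x,y)\le B_K$ for all $x,y$; (ii) $\int_X|K(x,y)|\,dm_X(x)<\infty$ for every $y\in Y$; (iii) for every $y$, $K(\cdot,y)$ is upper semi-continuous; (iv) $K(g(x),y)=K(x,g^{-1}(y))$ for all $g\in G,x\in X,y\in Y$. For an admissible kernel the integral $\int_X K(x,y)\,dm_X(x)$ is independent of $y$; this common value is the constant $C_K$. For a Borel probability measure $\mu$ on $Y$, the potential function is $U_K^\mu(x)=\int_Y K(x,y)\,d\mu(y)$, $x\in X$. *)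

theory Defs
  imports "HOL-Probability.Probability"
begin

definition usc :: "('a::topological_space \<Rightarrow> ereal) \<Rightarrow> bool" where
  "usc f \<longleftrightarrow> (\<forall>x t. f x < t \<longrightarrow> (\<forall>\<^sub>F z in at x. f z < t))"

definition ereal_integral :: "'a measure \<Rightarrow> ('a \<Rightarrow> ereal) \<Rightarrow> ereal" where
  "ereal_integral M f =
     enn2ereal (\<integral>\<^sup>+ x. e2ennreal (f x) \<partial>M) - enn2ereal (\<integral>\<^sup>+ x. e2ennreal (- f x) \<partial>M)"

definition isom_trans_action :: "('g::topological_group_add \<Rightarrow> 'x::metric_space \<Rightarrow> 'x) \<Rightarrow> bool" where
  "isom_trans_action act \<longleftrightarrow>
     (\<forall>x. act 0 x = x) \<and> (\<forall>g h x. act (g + h) x = act g (act h x)) \<and>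
     continuous_on UNIV (\<lambda>(g, x). act g x) \<and>
     (\<forall>g x x'. dist (act g x) (act g x') = dist x x') \<and>
     (\<forall>x x'. \<exists>g. act g x = x')"

definition invariant_prob :: "('g \<Rightarrow> 'x::topological_space \<Rightarrow> 'x) \<Rightarrow> 'x measure \<Rightarrow> bool" where
  "invariant_prob act m \<longleftrightarrow> prob_space m \<and> sets m = sets borel \<and>
     (\<forall>g A. A \<in> sets borel \<longrightarrow> emeasure m ((act g) -` A) = emeasure m A)"

definition admissible_kernel ::
  "('g::group_add \<Rightarrow> 'x::topological_space \<Rightarrow> 'x) \<Rightarrow> ('g \<Rightarrow> 'y::topological_space \<Rightarrow> 'y)
   \<Rightarrow> 'x measure \<Rightarrow> ('x \<Rightarrow> 'y \<Rightarrow> ereal) \<Rightarrow> bool" where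
  "admissible_kernel actX actY mX K \<longleftrightarrow>
     (\<lambda>(x, y). K x y) \<in> borel_measurable borel \<and>
     (\<exists>B::real. B \<ge> 0 \<and> (\<forall>x y. K x y \<le> ereal B)) \<and>
     (\<forall>y. (\<integral>\<^sup>+ x. e2ennreal \<bar>K x y\<bar> \<partial>mX) < \<infinity>) \<and>
     (\<forall>y. usc (\<lambda>x. K x y)) \<and>
     (\<forall>g x y. K (actX g x) y = K x (actY (- g) y))"

end

theory Submission
  imports Defs
begin

text \<open>Integrate \<open>K\<close> against \<open>m\<^sub>X \<otimes> \<mu>\<close> in both orders: integrating over \<open>x\<close> first gives \<open>C\<^sub>K\<close>,
  integrating over \<open>y\<close> first gives \<open>c\<close>. Because \<open>K\<close> is bounded above, the negative part
  of \<open>K\<close> has finite iterated integrals whenever the positive part does, so Tonelli's theorem applied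
  to both parts shows that the two orders agree.\<close>

lemma compact_metric_countable_basis:
  assumes "compact (UNIV :: 'a set)"
  obtains \<B> :: "'a::metric_space set set" where "countable \<B>" "topological_basis \<B>"
proof -
  have "\<forall>n::nat. \<exists>k. finite k \<and> (UNIV :: 'a set) \<subseteq> (\<Union>c\<in>k. ball c (1 / Suc n))"
    using assms unfolding compact_eq_totally_bounded by simp
  then obtain k where k: "\<And>n. finite (k n)" "\<And>n. (UNIV :: 'a set) \<subseteq> (\<Union>c\<in>k n. ball c (1 / Suc n))"
    by metis
  define \<B> where "\<B> = (\<Union>n. (\<lambda>c. ball c (1 / Suc n)) ` k n)"
  have "countable \<B>"
    unfolding \<B>_def by (auto intro: countable_finite k(1))
  moreover have "topological_basis \<B>"
  proof (rule topological_basisI)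
    fix U and x :: 'a assume "open U" "x \<in> U"
    then obtain e where e: "e > 0" "ball x e \<subseteq> U"
      by (meson open_contains_ball)
    obtain n :: nat where n: "1 / Suc n < e / 2"
      using e(1) by (metis half_gt_zero nat_approx_posE)
    obtain c where c: "c \<in> k n" "x \<in> ball c (1 / Suc n)"
      using k(2) by blast
    have "ball c (1 / Suc n) \<subseteq> ball x e"
      using c(2) n by (auto, metric)
    then show "\<exists>b\<in>\<B>. x \<in> b \<and> b \<subseteq> U"
      using c e(2) unfolding \<B>_def by blast
  qed (auto simp: \<B>_def)
  ultimately show ?thesis
    using that by blast
qed

lemma sets_borel_subset_pair_measure:
  fixes \<A> :: "'a::topological_space set set" and \<B> :: "'b::topological_space set set"
  assumes "countable \<A>" "topological_basis \<A>" "countable \<B>" "topological_basis \<B>"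
  shows "sets (borel :: ('a \<times> 'b) measure) \<subseteq> sets (borel \<Otimes>\<^sub>M borel)"
proof -
  let ?R = "(\<lambda>(a, b). a \<times> b) ` (\<A> \<times> \<B>)"
  have "borel = sigma UNIV ?R"
    using assms by (intro borel_eq_countable_basis topological_basis_prod) auto
  then have "sets borel = sigma_sets UNIV ?R"
    by (metis sets_measure_of Pow_UNIV top_greatest)
  also have "\<dots> \<subseteq> sets (borel \<Otimes>\<^sub>M borel)"
    using assms(2,4) sets.top[of "borel \<Otimes>\<^sub>M borel"]
    by (intro sets.sigma_sets_subset') (auto simp: space_pair_measure intro!: pair_measureI dest: topological_basis_open)
  finally show ?thesis .
qed

lemma measurable_borel_subset_pair_compact_metric:
  assumes "compact (UNIV :: 'a::metric_space set)" and "compact (UNIV :: 'b::metric_space set)"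
  shows "measurable (borel :: ('a \<times> 'b) measure) N \<subseteq> measurable (borel \<Otimes>\<^sub>M borel) N"
proof -
  obtain \<A> :: "'a set set" where "countable \<A>" "topological_basis \<A>"
    using compact_metric_countable_basis[OF assms(1)] .
  moreover obtain \<B> :: "'b set set" where "countable \<B>" "topological_basis \<B>"
    using compact_metric_countable_basis[OF assms(2)] .
  ultimately show ?thesis
    by (intro measurable_mono sets_borel_subset_pair_measure) (auto simp: space_pair_measure)
qed

lemma (in prob_space) nn_integral_diff_eq_const:
  assumes [measurable]: "f \<in> borel_measurable M"
    and bounded: "\<And>z. z \<in> space M \<Longrightarrow> f z \<le> ennreal B"
    and diff: "\<And>z. z \<in> space M \<Longrightarrow> enn2ereal (f z) - enn2ereal (g z) = ereal C"
  shows "enn2ereal (\<integral>\<^sup>+z. f z \<partial>M) - enn2ereal (\<integral>\<^sup>+z. g z \<partial>M) = ereal C"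
proof -
  define a where "a z = enn2real (f z)" for z
  have a_nonneg: "a z \<ge> 0" for z
    unfolding a_def by simp
  have f_eq: "f z = ennreal (a z)" if "z \<in> space M" for z
    using bounded[OF that] unfolding a_def
    by (metis ennreal_enn2real ennreal_less_top infinity_ennreal_def le_less_trans top.not_eq_extremum)
  have g_eq: "g z = ennreal (a z - C) \<and> a z - C \<ge> 0" if "z \<in> space M" for z
  proof (cases "g z")
    case (real r)
    with diff[OF that] f_eq[OF that] a_nonneg[of z] show ?thesis
      by simp
  next
    case top
    with diff[OF that] f_eq[OF that] a_nonneg[of z] show ?thesis
      by simp
  qed
  have a_le: "a z \<le> max B 0" if "z \<in> space M" for z
    using bounded[OF that] f_eq[OF that] a_nonneg[of z] by (auto simp: ennreal_le_iff2)
  have "a \<in> borel_measurable M"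
    unfolding a_def by measurable
  then have "integrable M a"
    using a_le a_nonneg by (intro integrable_const_bound[where B="max B 0"]) auto
  have "(\<integral>\<^sup>+z. f z \<partial>M) = (\<integral>\<^sup>+z. ennreal (a z) \<partial>M)"
    using f_eq by (rule nn_integral_cong)
  also have "\<dots> = ennreal (\<integral>z. a z \<partial>M)"
    using \<open>integrable M a\<close> a_nonneg by (intro nn_integral_eq_integral AE_I2) auto
  finally have int_f: "(\<integral>\<^sup>+z. f z \<partial>M) = ennreal (\<integral>z. a z \<partial>M)" .
  have "(\<integral>\<^sup>+z. g z \<partial>M) = (\<integral>\<^sup>+z. ennreal (a z - C) \<partial>M)"
    using g_eq by (intro nn_integral_cong) blast
  also have "\<dots> = ennreal (\<integral>z. a z - C \<partial>M)"
    using \<open>integrable M a\<close> g_eq by (intro nn_integral_eq_integral AE_I2) auto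
  finally have int_g: "(\<integral>\<^sup>+z. g z \<partial>M) = ennreal ((\<integral>z. a z \<partial>M) - C)"
    using \<open>integrable M a\<close> by (simp add: prob_space)
  have "(\<integral>z. a z \<partial>M) - C = (\<integral>z. a z - C \<partial>M)"
    using \<open>integrable M a\<close> by (simp add: prob_space)
  also have "\<dots> \<ge> 0"
    using g_eq by (intro integral_nonneg_AE AE_I2) auto
  finally have "(\<integral>z. a z \<partial>M) - C \<ge> 0" .
  moreover have "(\<integral>z. a z \<partial>M) \<ge> 0"
    using a_nonneg by simp
  ultimately show ?thesis
    by (simp add: int_f int_g)
qed

lemma ereal_integral_constant_sections_eq:
  fixes K :: "'a \<Rightarrow> 'b \<Rightarrow> ereal"
  assumes "prob_space M" "prob_space N"
    and K: "(\<lambda>(x, y). K x y) \<in> borel_measurable (M \<Otimes>\<^sub>M N)"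
    and bounded: "\<And>x y. K x y \<le> ereal B"
    and sections_M: "\<And>y. y \<in> space N \<Longrightarrow> ereal_integral M (\<lambda>x. K x y) = ereal C"
    and sections_N: "\<And>x. x \<in> space M \<Longrightarrow> ereal_integral N (\<lambda>y. K x y) = ereal c"
  shows "c = C"
proof -
  interpret M: prob_space M by fact
  interpret N: prob_space N by fact
  interpret pair_sigma_finite M N ..
  define pos neg where "pos x y = e2ennreal (K x y)" and "neg x y = e2ennreal (- K x y)" for x y
  have [measurable]: "(\<lambda>(x, y). pos x y) \<in> borel_measurable (M \<Otimes>\<^sub>M N)"
    "(\<lambda>(x, y). neg x y) \<in> borel_measurable (M \<Otimes>\<^sub>M N)"
    using K unfolding pos_def neg_def by measurable
  have pos_le: "pos x y \<le> ennreal B" for x y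
    using e2ennreal_mono[OF bounded] unfolding pos_def by simp
  have "enn2ereal (\<integral>\<^sup>+y. \<integral>\<^sup>+x. pos x y \<partial>M \<partial>N) - enn2ereal (\<integral>\<^sup>+y. \<integral>\<^sup>+x. neg x y \<partial>M \<partial>N) = ereal C"
    using sections_M unfolding ereal_integral_def pos_def[symmetric] neg_def[symmetric]
    by (intro N.nn_integral_diff_eq_const[where B=B] M.nn_integral_le_const AE_I2 pos_le) auto
  moreover have "enn2ereal (\<integral>\<^sup>+x. \<integral>\<^sup>+y. pos x y \<partial>N \<partial>M) - enn2ereal (\<integral>\<^sup>+x. \<integral>\<^sup>+y. neg x y \<partial>N \<partial>M) = ereal c"
    using sections_N unfolding ereal_integral_def pos_def[symmetric] neg_def[symmetric]
    by (intro M.nn_integral_diff_eq_const[where B=B] N.nn_integral_le_const AE_I2 pos_le) auto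
  ultimately show ?thesis
    by (simp add: Fubini')
qed

theorem lemma4p4:
  fixes actX :: "'g::topological_group_add \<Rightarrow> 'x::metric_space \<Rightarrow> 'x"
    and actY :: "'g \<Rightarrow> 'y::metric_space \<Rightarrow> 'y"
    and mX :: "'x measure" and mY :: "'y measure" and \<mu> :: "'y measure"
    and K :: "'x \<Rightarrow> 'y \<Rightarrow> ereal" and C_K c :: real
  assumes "compact (UNIV :: 'x set)" and "compact (UNIV :: 'y set)"
    and "compact (UNIV :: 'g set)"
    and "isom_trans_action actX" and "isom_trans_action actY"
    and "invariant_prob actX mX" and "invariant_prob actY mY"
    and "admissible_kernel actX actY mX K"
    and "\<forall>y. ereal_integral mX (\<lambda>x. K x y) = ereal C_K"
    and "prob_space \<mu>" and "sets \<mu> = sets borel"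
    and "\<forall>x. ereal_integral \<mu> (\<lambda>y. K x y) = ereal c"
  shows "c = C_K"
proof -
  have "prob_space mX" and sets_mX: "sets mX = sets borel"
    using assms(6) unfolding invariant_prob_def by auto
  obtain B :: real where bounded: "\<And>x y. K x y \<le> ereal B"
    using assms(8) unfolding admissible_kernel_def by blast
  have "(\<lambda>(x, y). K x y) \<in> borel_measurable (borel \<Otimes>\<^sub>M borel)"
    using assms(8) measurable_borel_subset_pair_compact_metric[OF assms(1,2)]
    unfolding admissible_kernel_def by blast
  then have "(\<lambda>(x, y). K x y) \<in> borel_measurable (mX \<Otimes>\<^sub>M \<mu>)"
    by (simp add: sets_pair_measure_cong[OF sets_mX assms(11)] cong: measurable_cong_sets)
  then show ?thesis
    using \<open>prob_space mX\<close> assms(9,10,12) bounded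
    by (intro ereal_integral_constant_sections_eq[where M=mX and N=\<mu> and B=B]) auto
qed

end
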